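(* For integers $n \ge m > 1$, $\det'(K_{n,m}) = n-1$ if $n \neq m$, and $\det'(K_{n,m}) = n$ if $n = m$.
   Context: $K_{n,m}$ is the complete bipartite graph with parts of sizes $n$ and $m$. For a graph $G$ with at most one isolated vertex and no component isomorphic to $K_2$, an edge subset $T$ is an edge determining set if the only automorphism $\phi$ of $G$ satisfying $\{\phi(u),\phi(v)\}=\{u,v\}$ for all $\{u,v\}\in T$ is the identity; the determining index $\det'(G)$ is the minimum size of an edge determining set. *)

theory Defs
  imports Main
begin

definition graph_automorphism :: "'a set \<Rightarrow> 'a set set \<Rightarrow> ('a \<Rightarrow> 'a) \<Rightarrow> bool" where
  "graph_automorphism V E \<phi> \<longleftrightarrow>
     bij_betw \<phi> V V \<and> (\<forall>u\<in>V. \<forall>v\<in>V. ({u, v} \<in> E \<longleftrightarrow> {\<phi> u, \<phi> v} \<in> E))"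

definition edge_determining_set :: "'a set \<Rightarrow> 'a set set \<Rightarrow> 'a set set \<Rightarrow> bool" where
  "edge_determining_set V E T \<longleftrightarrow> T \<subseteq> E \<and>
     (\<forall>\<phi>. graph_automorphism V E \<phi> \<and>
           (\<forall>u v. {u, v} \<in> T \<longrightarrow> {\<phi> u, \<phi> v} = {u, v})
           \<longrightarrow> (\<forall>x\<in>V. \<phi> x = x))"

definition determining_index :: "'a set \<Rightarrow> 'a set set \<Rightarrow> nat" where
  "determining_index V E =
     (LEAST k. \<exists>T. edge_determining_set V E T \<and> finite T \<and> card T = k)"

definition Knm_vertices :: "nat \<Rightarrow> nat \<Rightarrow> (nat + nat) set" where
  "Knm_vertices n m = Inl ` {..<n} \<union> Inr ` {..<m}"

definition Knm_edges :: "nat \<Rightarrow> nat \<Rightarrow> (nat + nat) set set" where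
  "Knm_edges n m = {{Inl i, Inr j} | i j. i < n \<and> j < m}"

end

theory Submission
  imports Defs "HOL-Combinatorics.Transposition"
begin

text \<open>Automorphisms of \<open>K\<^sub>n\<^sub>,\<^sub>m\<close> are the side-preserving permutations of the vertices,
  plus the side exchanges when \<open>n = m\<close>. Exchanging two vertices of one side fixes every edge
  avoiding both, so an edge determining set covers all but at most one vertex of each side and has
  at least \<open>n - 1\<close> edges. For \<open>n = m\<close> a determining set with \<open>n - 1\<close> edges would be a matching
  missing one vertex on each side; exchanging the sides along the perfect matching obtained by
  joining the two missing vertices fixes all its edges.

  Conversely, joining left vertex \<open>i < k\<close> to right vertex \<open>min i (m - 2)\<close> gives a determining
  set: a side-preserving automorphism fixing these edges fixes all but at most one vertex on each
  side, hence everything, and for \<open>k = n\<close> the right vertex \<open>m - 2\<close> has two partners, which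
  excludes side exchanges.\<close>

lemma determining_index_eqI:
  assumes "edge_determining_set V E T" "finite T" "card T = k"
    and "\<And>T'. edge_determining_set V E T' \<Longrightarrow> finite T' \<Longrightarrow> k \<le> card T'"
  shows "determining_index V E = k"
  unfolding determining_index_def
  by (rule Least_equality) (use assms in blast)+

lemma edge_determining_setD:
  assumes "edge_determining_set V E T" "graph_automorphism V E \<phi>"
    and "\<And>e. e \<in> T \<Longrightarrow> \<phi> ` e = e" "x \<in> V"
  shows "\<phi> x = x"
  using assms unfolding edge_determining_set_def by (metis image_insert image_empty)

lemma card_le_Suc_card_if_subsingleton_diff:
  assumes "finite B" "A \<subseteq> B" "\<And>x y. x \<in> B - A \<Longrightarrow> y \<in> B - A \<Longrightarrow> x = y"
  shows "card B \<le> Suc (card A)"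
proof -
  have "card (B - A) \<le> Suc 0"
    using assms by (simp add: card_le_Suc0_iff_eq)
  then show ?thesis
    using assms by (simp add: card_Diff_subset finite_subset)
qed

lemma inj_on_fixes_remaining_point:
  assumes "inj_on \<phi> S" "\<phi> ` S \<subseteq> S" "x \<in> S" "\<And>y. y \<in> S \<Longrightarrow> y \<noteq> x \<Longrightarrow> \<phi> y = y"
  shows "\<phi> x = x"
proof (rule ccontr)
  assume moved: "\<phi> x \<noteq> x"
  have "\<phi> x \<in> S" using assms by blast
  then have "\<phi> (\<phi> x) = \<phi> x" using assms(4) moved by blast
  then show False using inj_onD[OF assms(1)] \<open>\<phi> x \<in> S\<close> assms(3) moved by blast
qed

lemma bij_betw_of_injective_projections:
  assumes "inj_on fst Q" "inj_on snd Q"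
  obtains f where "bij_betw f (fst ` Q) (snd ` Q)" "\<And>i j. (i, j) \<in> Q \<Longrightarrow> f i = j"
proof
  have "bij_betw (the_inv_into Q fst) (fst ` Q) Q"
    using assms(1) by (simp add: bij_betw_the_inv_into inj_on_imp_bij_betw)
  moreover have "bij_betw snd Q (snd ` Q)"
    using assms(2) by (simp add: inj_on_imp_bij_betw)
  ultimately show "bij_betw (snd \<circ> the_inv_into Q fst) (fst ` Q) (snd ` Q)"
    by (rule bij_betw_trans)
  show "(snd \<circ> the_inv_into Q fst) i = j" if "(i, j) \<in> Q" for i j
    using the_inv_into_f_eq[OF assms(1) _ that] by simp
qed

lemma bij_completion_to_lessThan:
  assumes "finite P" "\<pi> ` P \<subseteq> {..<n}" "card P = n - 1" "n \<le> Suc (card (\<pi> ` P))" "0 < n"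
  obtains a where "a < n" "a \<notin> \<pi> ` P"
    "\<And>q. \<pi> q = a \<Longrightarrow> \<pi> ` insert q P = {..<n} \<and> inj_on \<pi> (insert q P)"
proof -
  have card_image: "card (\<pi> ` P) = card P"
    using assms card_image_le[OF \<open>finite P\<close>, of \<pi>] by linarith
  then have inj: "inj_on \<pi> P"
    using \<open>finite P\<close> by (simp add: inj_on_iff_eq_card)
  have "\<not> {..<n} \<subseteq> \<pi> ` P"
    using card_mono[OF finite_imageI[OF \<open>finite P\<close>]] card_image assms by fastforce
  then obtain a where a: "a < n" "a \<notin> \<pi> ` P" by auto
  show thesis
  proof (rule that[OF a])
    fix q assume "\<pi> q = a"
    then have image: "\<pi> ` insert q P = insert a (\<pi> ` P)" by simp
    show "\<pi> ` insert q P = {..<n} \<and> inj_on \<pi> (insert q P)"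
    proof
      show "\<pi> ` insert q P = {..<n}"
        unfolding image using a assms card_image
        by (intro card_subset_eq) (auto simp: finite_subset)
      show "inj_on \<pi> (insert q P)"
        using inj a \<open>\<pi> q = a\<close> by (auto simp: inj_on_insert)
    qed
  qed
qed

lemma Knm_vertices_iff:
  "x \<in> Knm_vertices n m \<longleftrightarrow> (case x of Inl i \<Rightarrow> i < n | Inr j \<Rightarrow> j < m)"
  by (cases x) (auto simp: Knm_vertices_def)

lemma Knm_edge_iff: "{Inl i, Inr j} \<in> Knm_edges n m \<longleftrightarrow> i < n \<and> j < m"
  by (auto simp: Knm_edges_def doubleton_eq_iff)

lemma Knm_adjacent_iff:
  assumes "u \<in> Knm_vertices n m" "v \<in> Knm_vertices n m"
  shows "{u, v} \<in> Knm_edges n m \<longleftrightarrow> isl u \<noteq> isl v"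
  using assms
  by (cases u; cases v) (auto simp: Knm_vertices_iff Knm_edges_def doubleton_eq_iff)

lemma Knm_automorphism_iff:
  "graph_automorphism (Knm_vertices n m) (Knm_edges n m) \<phi> \<longleftrightarrow>
     bij_betw \<phi> (Knm_vertices n m) (Knm_vertices n m) \<and>
     (\<forall>u\<in>Knm_vertices n m. \<forall>v\<in>Knm_vertices n m. isl (\<phi> u) = isl (\<phi> v) \<longleftrightarrow> isl u = isl v)"
proof -
  have "({u, v} \<in> Knm_edges n m \<longleftrightarrow> {\<phi> u, \<phi> v} \<in> Knm_edges n m) \<longleftrightarrow>
        (isl (\<phi> u) = isl (\<phi> v) \<longleftrightarrow> isl u = isl v)"
    if "bij_betw \<phi> (Knm_vertices n m) (Knm_vertices n m)"
      "u \<in> Knm_vertices n m" "v \<in> Knm_vertices n m" for u v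
  proof -
    have "\<phi> u \<in> Knm_vertices n m" "\<phi> v \<in> Knm_vertices n m"
      using that bij_betwE by blast+
    then show ?thesis using that(2,3) by (simp add: Knm_adjacent_iff) blast
  qed
  then show ?thesis
    unfolding graph_automorphism_def by blast
qed

lemma Knm_automorphism_side_cases:
  assumes aut: "graph_automorphism (Knm_vertices n m) (Knm_edges n m) \<phi>"
    and "m \<le> n" "0 < n"
  shows "(\<forall>u\<in>Knm_vertices n m. isl (\<phi> u) = isl u) \<or>
         (n = m \<and> (\<forall>u\<in>Knm_vertices n m. isl (\<phi> u) \<noteq> isl u))"
proof -
  have bij: "bij_betw \<phi> (Knm_vertices n m) (Knm_vertices n m)"
    and sides: "\<forall>u\<in>Knm_vertices n m. \<forall>v\<in>Knm_vertices n m. isl (\<phi> u) = isl (\<phi> v) \<longleftrightarrow> isl u = isl v"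
    using aut by (simp_all add: Knm_automorphism_iff)
  have Inl0: "Inl 0 \<in> Knm_vertices n m" using assms by (simp add: Knm_vertices_iff)
  have side: "isl (\<phi> u) \<longleftrightarrow> (isl u \<longleftrightarrow> isl (\<phi> (Inl 0)))" if "u \<in> Knm_vertices n m" for u
    using sides[rule_format, OF that Inl0] by auto
  show ?thesis
  proof (cases "isl (\<phi> (Inl 0))")
    case True
    then show ?thesis using side by auto
  next
    case False
    then have swapped: "\<forall>u\<in>Knm_vertices n m. isl (\<phi> u) \<noteq> isl u"
      using side by auto
    have "inj_on \<phi> (Inl ` {..<n})"
      using bij by (rule inj_on_subset[OF bij_betw_imp_inj_on]) (auto simp: Knm_vertices_def)
    moreover have "\<phi> ` Inl ` {..<n} \<subseteq> Inr ` {..<m}"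
    proof
      fix y assume "y \<in> \<phi> ` Inl ` {..<n}"
      then obtain i where "i < n" and y: "y = \<phi> (Inl i)" by auto
      then have "Inl i \<in> Knm_vertices n m" by (simp add: Knm_vertices_iff)
      then have "y \<in> Knm_vertices n m" "\<not> isl y"
        using y bij_betwE[OF bij] swapped by auto
      then show "y \<in> Inr ` {..<m}" by (cases y) (auto simp: Knm_vertices_iff)
    qed
    ultimately have "card (Inl ` {..<n} :: (nat + nat) set) \<le> card (Inr ` {..<m} :: (nat + nat) set)"
      by (intro card_inj_on_le) simp_all
    then have "n \<le> m" by (simp add: card_image)
    then show ?thesis using \<open>m \<le> n\<close> swapped by simp
  qed
qed

lemma Knm_side_preserving_fixes_side:
  assumes aut: "graph_automorphism (Knm_vertices n m) (Knm_edges n m) \<phi>"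
    and sides: "\<forall>u\<in>Knm_vertices n m. isl (\<phi> u) = isl u"
    and x: "x \<in> Knm_vertices n m"
    and others: "\<And>y. y \<in> Knm_vertices n m \<Longrightarrow> isl y = isl x \<Longrightarrow> y \<noteq> z \<Longrightarrow> \<phi> y = y"
  shows "\<phi> x = x"
proof (cases "x = z")
  case True
  let ?S = "{y \<in> Knm_vertices n m. isl y = isl x}"
  have bij: "bij_betw \<phi> (Knm_vertices n m) (Knm_vertices n m)"
    using aut by (simp add: Knm_automorphism_iff)
  show ?thesis
  proof (rule inj_on_fixes_remaining_point[where S = ?S])
    show "inj_on \<phi> ?S"
      using bij by (rule inj_on_subset[OF bij_betw_imp_inj_on]) blast
    show "\<phi> ` ?S \<subseteq> ?S"
      using bij_betwE[OF bij] sides by auto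
  qed (use x others True in auto)
qed (use x others in auto)

lemma Knm_transpose_automorphism:
  assumes "u \<in> Knm_vertices n m" "v \<in> Knm_vertices n m" "isl u = isl v"
  shows "graph_automorphism (Knm_vertices n m) (Knm_edges n m) (transpose u v)"
proof -
  have "isl (transpose u v x) = isl x" for x
    using assms(3) by (simp add: transpose_def)
  then show ?thesis
    using assms by (simp add: Knm_automorphism_iff)
qed

lemma Knm_matching_swap_automorphism:
  assumes f: "bij_betw f {..<n} {..<n}"
  shows "graph_automorphism (Knm_vertices n n) (Knm_edges n n)
           (case_sum (\<lambda>i. Inr (f i)) (\<lambda>j. Inl (inv_into {..<n} f j)))"
    (is "graph_automorphism _ _ ?\<phi>")
proof -
  have inv: "bij_betw (inv_into {..<n} f) {..<n} {..<n}"
    using f by (rule bij_betw_inv_into)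
  have "?\<phi> (?\<phi> x) = x \<and> ?\<phi> x \<in> Knm_vertices n n" if "x \<in> Knm_vertices n n" for x
    using that f inv bij_betwE[OF f] bij_betwE[OF inv]
    by (cases x) (auto simp: Knm_vertices_iff bij_betw_def inv_into_f_f f_inv_into_f)
  then have "bij_betw ?\<phi> (Knm_vertices n n) (Knm_vertices n n)"
    by (intro bij_betw_byWitness[where f' = ?\<phi>]) auto
  moreover have "isl (?\<phi> x) \<longleftrightarrow> \<not> isl x" for x
    by (cases x) simp_all
  ultimately show ?thesis by (simp add: Knm_automorphism_iff)
qed

lemma Knm_determining_covers_side:
  assumes det: "edge_determining_set (Knm_vertices n m) (Knm_edges n m) T"
    and "u \<in> Knm_vertices n m" "v \<in> Knm_vertices n m" "isl u = isl v" "u \<noteq> v"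
  shows "(\<exists>e\<in>T. u \<in> e) \<or> (\<exists>e\<in>T. v \<in> e)"
proof (rule ccontr)
  assume "\<not> ?thesis"
  then have "transpose u v ` e = e" if "e \<in> T" for e
    using that by (force simp: transpose_def)
  then have "transpose u v u = u"
    using edge_determining_setD[OF det Knm_transpose_automorphism] assms by blast
  then show False using \<open>u \<noteq> v\<close> by simp
qed

definition Knm_pairs :: "(nat + nat) set set \<Rightarrow> (nat \<times> nat) set" where
  "Knm_pairs T = {(i, j). {Inl i, Inr j} \<in> T}"

lemma Knm_edges_subset_eq_image_pairs:
  assumes "T \<subseteq> Knm_edges n m"
  shows "T = (\<lambda>(i, j). {Inl i, Inr j}) ` Knm_pairs T"
  using assms by (force simp: Knm_pairs_def Knm_edges_def)

lemma Knm_pairs_bounded: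
  assumes "T \<subseteq> Knm_edges n m" "(i, j) \<in> Knm_pairs T"
  shows "i < n" "j < m"
  using assms by (auto simp: Knm_pairs_def Knm_edge_iff)

lemma card_Knm_pairs:
  assumes "T \<subseteq> Knm_edges n m" "finite T"
  shows "finite (Knm_pairs T)" "card (Knm_pairs T) = card T"
proof -
  have inj: "inj_on (\<lambda>(i, j). {Inl i, Inr j} :: (nat + nat) set) (Knm_pairs T)"
    by (auto simp: inj_on_def doubleton_eq_iff)
  have T: "T = (\<lambda>(i, j). {Inl i, Inr j}) ` Knm_pairs T"
    using assms(1) by (rule Knm_edges_subset_eq_image_pairs)
  show "finite (Knm_pairs T)"
    using assms(2) finite_imageD[OF _ inj] T by simp
  show "card (Knm_pairs T) = card T"
    using card_image[OF inj] T by simp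
qed

lemma Knm_covered_Inl_iff:
  assumes "T \<subseteq> Knm_edges n m"
  shows "(\<exists>e\<in>T. Inl i \<in> e) \<longleftrightarrow> i \<in> fst ` Knm_pairs T"
  by (subst Knm_edges_subset_eq_image_pairs[OF assms]) force

lemma Knm_covered_Inr_iff:
  assumes "T \<subseteq> Knm_edges n m"
  shows "(\<exists>e\<in>T. Inr j \<in> e) \<longleftrightarrow> j \<in> snd ` Knm_pairs T"
  by (subst Knm_edges_subset_eq_image_pairs[OF assms]) force

lemma Knm_determining_card_fst_pairs:
  assumes det: "edge_determining_set (Knm_vertices n m) (Knm_edges n m) T"
  shows "n \<le> Suc (card (fst ` Knm_pairs T))"
proof -
  have TE: "T \<subseteq> Knm_edges n m" using det by (simp add: edge_determining_set_def)
  have "card {..<n} \<le> Suc (card (fst ` Knm_pairs T))"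
  proof (rule card_le_Suc_card_if_subsingleton_diff)
    show "fst ` Knm_pairs T \<subseteq> {..<n}" using TE Knm_pairs_bounded by force
    show "x = y" if "x \<in> {..<n} - fst ` Knm_pairs T" "y \<in> {..<n} - fst ` Knm_pairs T" for x y
      using Knm_determining_covers_side[OF det, of "Inl x" "Inl y"] that
      by (auto simp: Knm_vertices_iff Knm_covered_Inl_iff[OF TE])
  qed simp
  then show ?thesis by simp
qed

lemma Knm_determining_card_snd_pairs:
  assumes det: "edge_determining_set (Knm_vertices n m) (Knm_edges n m) T"
  shows "m \<le> Suc (card (snd ` Knm_pairs T))"
proof -
  have TE: "T \<subseteq> Knm_edges n m" using det by (simp add: edge_determining_set_def)
  have "card {..<m} \<le> Suc (card (snd ` Knm_pairs T))"
  proof (rule card_le_Suc_card_if_subsingleton_diff)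
    show "snd ` Knm_pairs T \<subseteq> {..<m}" using TE Knm_pairs_bounded by force
    show "x = y" if "x \<in> {..<m} - snd ` Knm_pairs T" "y \<in> {..<m} - snd ` Knm_pairs T" for x y
      using Knm_determining_covers_side[OF det, of "Inr x" "Inr y"] that
      by (auto simp: Knm_vertices_iff Knm_covered_Inr_iff[OF TE])
  qed simp
  then show ?thesis by simp
qed

lemma Knm_determining_card_ge:
  assumes det: "edge_determining_set (Knm_vertices n m) (Knm_edges n m) T" and "finite T"
  shows "n - 1 \<le> card T"
proof -
  have TE: "T \<subseteq> Knm_edges n m" using det by (simp add: edge_determining_set_def)
  have "n \<le> Suc (card (fst ` Knm_pairs T))"
    using det by (rule Knm_determining_card_fst_pairs)
  also have "\<dots> \<le> Suc (card (Knm_pairs T))"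
    using card_image_le[OF card_Knm_pairs(1)[OF TE \<open>finite T\<close>]] by simp
  finally show ?thesis
    using card_Knm_pairs[OF TE \<open>finite T\<close>] by simp
qed

lemma Knm_not_determining_inside_perfect_matching:
  assumes det: "edge_determining_set (Knm_vertices n n) (Knm_edges n n) T"
    and f: "bij_betw f {..<n} {..<n}"
    and matched: "\<And>i j. (i, j) \<in> Knm_pairs T \<Longrightarrow> f i = j"
    and "0 < n"
  shows False
proof -
  have TE: "T \<subseteq> Knm_edges n n" using det by (simp add: edge_determining_set_def)
  let ?\<phi> = "case_sum (\<lambda>i. Inr (f i)) (\<lambda>j. Inl (inv_into {..<n} f j)) :: nat + nat \<Rightarrow> nat + nat"
  have "?\<phi> ` e = e" if "e \<in> T" for e
  proof -
    have "e \<in> Knm_edges n n" using TE that by blast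
    then obtain i j where ij: "e = {Inl i, Inr j}" "i < n" unfolding Knm_edges_def by blast
    then have "f i = j" using that matched by (simp add: Knm_pairs_def)
    then have "inv_into {..<n} f j = i"
      using f \<open>i < n\<close> by (auto simp: bij_betw_def inv_into_f_f)
    then show ?thesis using ij \<open>f i = j\<close> by auto
  qed
  moreover have "Inl 0 \<in> Knm_vertices n n" using \<open>0 < n\<close> by (simp add: Knm_vertices_iff)
  ultimately have "?\<phi> (Inl 0) = Inl 0"
    by (rule edge_determining_setD[OF det Knm_matching_swap_automorphism[OF f]])
  then show False by simp
qed

lemma Knm_balanced_determining_card_ge:
  assumes det: "edge_determining_set (Knm_vertices n n) (Knm_edges n n) T"
    and "finite T" "0 < n"
  shows "n \<le> card T"
proof (rule ccontr)
  assume "\<not> n \<le> card T"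
  define P where "P = Knm_pairs T"
  have TE: "T \<subseteq> Knm_edges n n" using det by (simp add: edge_determining_set_def)
  have P: "finite P" "card P = n - 1"
    using card_Knm_pairs[OF TE \<open>finite T\<close>] Knm_determining_card_ge[OF det \<open>finite T\<close>]
      \<open>\<not> n \<le> card T\<close> by (simp_all add: P_def)
  have card_proj: "n \<le> Suc (card (fst ` P))" "n \<le> Suc (card (snd ` P))"
    using Knm_determining_card_fst_pairs[OF det] Knm_determining_card_snd_pairs[OF det]
    by (simp_all add: P_def)
  have bounded: "fst ` P \<subseteq> {..<n}" "snd ` P \<subseteq> {..<n}"
    using Knm_pairs_bounded[OF TE] by (force simp: P_def)+
  obtain a where "a < n" "a \<notin> fst ` P"
    and fst_Q: "\<And>q. fst q = a \<Longrightarrow> fst ` insert q P = {..<n} \<and> inj_on fst (insert q P)"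
    by (rule bij_completion_to_lessThan[OF P(1) bounded(1) P(2) card_proj(1) \<open>0 < n\<close>]) iprover
  obtain b where "b < n" "b \<notin> snd ` P"
    and snd_Q: "\<And>q. snd q = b \<Longrightarrow> snd ` insert q P = {..<n} \<and> inj_on snd (insert q P)"
    by (rule bij_completion_to_lessThan[OF P(1) bounded(2) P(2) card_proj(2) \<open>0 < n\<close>]) iprover
  define Q where "Q = insert (a, b) P"
  have Q: "inj_on fst Q" "inj_on snd Q" "fst ` Q = {..<n}" "snd ` Q = {..<n}"
    using fst_Q[of "(a, b)"] snd_Q[of "(a, b)"] by (simp_all add: Q_def)
  obtain f where "bij_betw f (fst ` Q) (snd ` Q)" and matched: "\<And>i j. (i, j) \<in> Q \<Longrightarrow> f i = j"
    using bij_betw_of_injective_projections[OF Q(1,2)] by blast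
  then have "bij_betw f {..<n} {..<n}" using Q(3,4) by simp
  moreover have "f i = j" if "(i, j) \<in> Knm_pairs T" for i j
    using matched that by (simp add: Q_def P_def)
  ultimately show False
    by (rule Knm_not_determining_inside_perfect_matching[OF det _ _ \<open>0 < n\<close>])
qed

definition Knm_staircase :: "nat \<Rightarrow> nat \<Rightarrow> (nat + nat) set set" where
  "Knm_staircase m k = (\<lambda>i. {Inl i, Inr (min i (m - 2))}) ` {..<k}"

lemma card_Knm_staircase: "card (Knm_staircase m k) = k"
proof -
  have "inj_on (\<lambda>i. {Inl i, Inr (min i (m - 2))} :: (nat + nat) set) {..<k}"
    by (auto simp: inj_on_def doubleton_eq_iff)
  then show ?thesis by (simp add: Knm_staircase_def card_image)
qed

lemma Knm_staircase_subset_edges: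
  assumes "k \<le> n" "1 < m"
  shows "Knm_staircase m k \<subseteq> Knm_edges n m"
  using assms by (auto simp: Knm_staircase_def Knm_edge_iff)

lemma Knm_staircase_rung_fixed:
  assumes "\<forall>e\<in>Knm_staircase m k. \<phi> ` e = e" "i < k"
  shows "{\<phi> (Inl i), \<phi> (Inr (min i (m - 2)))} = {Inl i, Inr (min i (m - 2))}"
  using assms by (auto simp: Knm_staircase_def)

lemma Knm_staircase_excludes_side_exchange:
  assumes aut: "graph_automorphism (Knm_vertices n m) (Knm_edges n m) \<phi>"
    and fixed: "\<forall>e\<in>Knm_staircase m k. \<phi> ` e = e"
    and "m \<le> n" "1 < m" "n = m \<Longrightarrow> k = n"
  shows "\<forall>u\<in>Knm_vertices n m. isl (\<phi> u) = isl u"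
proof (rule ccontr)
  assume "\<not> ?thesis"
  then have "n = m" and exchange: "\<forall>u\<in>Knm_vertices n m. isl (\<phi> u) \<noteq> isl u"
    using Knm_automorphism_side_cases[OF aut \<open>m \<le> n\<close>] assms by auto
  have partner: "\<phi> (Inr (n - 2)) = Inl i" if "n - 2 \<le> i" "i < n" for i
  proof -
    have "\<not> isl (\<phi> (Inl i))"
      using exchange that by (simp add: Knm_vertices_iff)
    then show ?thesis
      using Knm_staircase_rung_fixed[OF fixed, of i] \<open>n = m\<close> that assms
      by (auto simp: doubleton_eq_iff)
  qed
  have "n - 2 < n" "n - 1 < n" "n - 2 \<noteq> n - 1" using \<open>1 < m\<close> \<open>n = m\<close> by auto
  then show False using partner[of "n - 2"] partner[of "n - 1"] by simp
qed

lemma Knm_staircase_side_preserving_fixes_vertex: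
  assumes aut: "graph_automorphism (Knm_vertices n m) (Knm_edges n m) \<phi>"
    and fixed: "\<forall>e\<in>Knm_staircase m k. \<phi> ` e = e"
    and sides: "\<forall>u\<in>Knm_vertices n m. isl (\<phi> u) = isl u"
    and "m \<le> n" "n - 1 \<le> k" "k \<le> n"
    and x: "x \<in> Knm_vertices n m"
  shows "\<phi> x = x"
proof (rule Knm_side_preserving_fixes_side[OF aut sides x])
  have rung: "\<phi> (Inl i) = Inl i \<and> \<phi> (Inr (min i (m - 2))) = Inr (min i (m - 2))" if "i < k" for i
  proof -
    have "isl (\<phi> (Inl i))"
      using sides that \<open>k \<le> n\<close> by (simp add: Knm_vertices_iff)
    then show ?thesis using Knm_staircase_rung_fixed[OF fixed that] by (auto simp: doubleton_eq_iff)
  qed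
  fix y assume y: "y \<in> Knm_vertices n m" "isl y = isl x"
    "y \<noteq> (if isl x then Inl (n - 1) else Inr (m - 1))"
  then show "\<phi> y = y"
  proof (cases y)
    case (Inl i)
    then have "i < k" using y assms by (auto simp: Knm_vertices_iff split: if_splits)
    then show ?thesis using rung Inl by blast
  next
    case (Inr j)
    then have "j < k" "min j (m - 2) = j"
      using y assms by (auto simp: Knm_vertices_iff split: if_splits)
    then show ?thesis using rung[of j] Inr by simp
  qed
qed

lemma Knm_staircase_determining:
  assumes "m \<le> n" "1 < m" "n - 1 \<le> k" "k \<le> n" "n = m \<Longrightarrow> k = n"
  shows "edge_determining_set (Knm_vertices n m) (Knm_edges n m) (Knm_staircase m k)"
  unfolding edge_determining_set_def
proof (intro conjI allI impI ballI)
  show "Knm_staircase m k \<subseteq> Knm_edges n m"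
    using assms by (intro Knm_staircase_subset_edges) auto
  fix \<phi> x
  assume "graph_automorphism (Knm_vertices n m) (Knm_edges n m) \<phi> \<and>
    (\<forall>u v. {u, v} \<in> Knm_staircase m k \<longrightarrow> {\<phi> u, \<phi> v} = {u, v})"
  moreover have "\<exists>u v. e = {u, v}" if "e \<in> Knm_staircase m k" for e
    using that by (auto simp: Knm_staircase_def)
  ultimately have aut: "graph_automorphism (Knm_vertices n m) (Knm_edges n m) \<phi>"
    and fixed: "\<forall>e\<in>Knm_staircase m k. \<phi> ` e = e"
    by fastforce+
  assume "x \<in> Knm_vertices n m"
  with Knm_staircase_excludes_side_exchange[OF aut fixed] assms
  show "\<phi> x = x"
    by (intro Knm_staircase_side_preserving_fixes_vertex[OF aut fixed]) auto
qed

theorem theorem7: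
  fixes n m :: nat
  assumes "n \<ge> m" and "m > 1"
  shows "determining_index (Knm_vertices n m) (Knm_edges n m) =
           (if n \<noteq> m then n - 1 else n)"
proof (rule determining_index_eqI)
  let ?k = "if n \<noteq> m then n - 1 else n"
  show "edge_determining_set (Knm_vertices n m) (Knm_edges n m) (Knm_staircase m ?k)"
    using assms by (intro Knm_staircase_determining) auto
  show "finite (Knm_staircase m ?k)" by (simp add: Knm_staircase_def)
  show "card (Knm_staircase m ?k) = ?k" by (rule card_Knm_staircase)
  fix T assume det: "edge_determining_set (Knm_vertices n m) (Knm_edges n m) T" and "finite T"
  show "?k \<le> card T"
  proof (cases "n = m")
    case True
    then show ?thesis
      using Knm_balanced_determining_card_ge[of n T] det \<open>finite T\<close> assms by simp
  next
    case False
    then show ?thesis using Knm_determining_card_ge[OF det \<open>finite T\<close>] by simp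
  qed
qed

end
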